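(* For every integer $r\ge4$, \[ f_r(r+1,r)=\rho_r\big(T(r+2,r)\big)=\frac{4}{r+2}. \]
   Context: $\mathcal{G}(\Delta,\omega)$ denotes the class of finite simple graphs $G$ with maximum degree $\Delta(G)\le\Delta$ and clique number $\omega(G)\le\omega$. $k_t(G)$ is the number of copies of $K_t$ in $G$ and $\rho_t(G)=k_t(G)/|V(G)|$. $f_t(\Delta,\omega)=\sup\{\rho_t(G): G\in\mathcal{G}(\Delta,\omega),\ |V(G)|\ge 1\}$. $T(n,r)$ denotes the $r$-partite Turán graph on $n$ vertices; for $r\ge 4$, $T(r+2,r)$ has $r-2$ parts of size $1$ and two parts of size $2$. *)

theory Defs
  imports Complex_Main
begin

definition simple_graph :: "'a set \<Rightarrow> 'a set set \<Rightarrow> bool" where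
  "simple_graph V E \<longleftrightarrow> finite V \<and> (\<forall>e\<in>E. e \<subseteq> V \<and> card e = 2)"

definition graph_degree :: "'a set \<Rightarrow> 'a set set \<Rightarrow> 'a \<Rightarrow> nat" where
  "graph_degree V E v = card {u \<in> V. {u, v} \<in> E}"

definition is_clique :: "'a set \<Rightarrow> 'a set set \<Rightarrow> 'a set \<Rightarrow> bool" where
  "is_clique V E S \<longleftrightarrow> S \<subseteq> V \<and> (\<forall>x\<in>S. \<forall>y\<in>S. x \<noteq> y \<longrightarrow> {x, y} \<in> E)"

definition max_degree_le :: "'a set \<Rightarrow> 'a set set \<Rightarrow> nat \<Rightarrow> bool" where
  "max_degree_le V E D \<longleftrightarrow> (\<forall>v\<in>V. graph_degree V E v \<le> D)"

definition clique_number_le :: "'a set \<Rightarrow> 'a set set \<Rightarrow> nat \<Rightarrow> bool" where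
  "clique_number_le V E w \<longleftrightarrow> (\<forall>S. is_clique V E S \<longrightarrow> card S \<le> w)"

definition k_count :: "nat \<Rightarrow> 'a set \<Rightarrow> 'a set set \<Rightarrow> nat" where
  "k_count t V E = card {S. is_clique V E S \<and> card S = t}"

definition rho :: "nat \<Rightarrow> 'a set \<Rightarrow> 'a set set \<Rightarrow> real" where
  "rho t V E = real (k_count t V E) / real (card V)"

text \<open>The class G(D,w); vertices are taken from nat (every finite graph is
  isomorphic to one on natural-number vertices).\<close>
definition graph_class :: "nat \<Rightarrow> nat \<Rightarrow> (nat set \<times> nat set set) set" where
  "graph_class D w = {(V, E). simple_graph V E \<and> max_degree_le V E D \<and> clique_number_le V E w}"

definition f_sup :: "nat \<Rightarrow> nat \<Rightarrow> nat \<Rightarrow> real" where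
  "f_sup t D w = Sup {rho t V E | V E. (V, E) \<in> graph_class D w \<and> card V \<ge> 1}"

text \<open>Turan graph T(n,r): vertices 0..n-1, vertex i in part (i mod r), edges between
  vertices of different parts; the parts have sizes as equal as possible.\<close>
definition turan_V :: "nat \<Rightarrow> nat set" where
  "turan_V n = {0..<n}"

definition turan_E :: "nat \<Rightarrow> nat \<Rightarrow> nat set set" where
  "turan_E n r = {{i, j} | i j. i < n \<and> j < n \<and> i mod r \<noteq> j mod r}"

end

theory Submission
  imports Defs
begin

text \<open>Let G have maximum degree at most r + 1 and no (r + 1)-clique, and let c(v) be the
  number of r-cliques through v. A vertex v of an r-clique K has at most two neighbours
  outside K, and an r-clique through v is determined by its part outside K, so c(v) \<le> 4.
  Analysing how the r-cliques through v can meet K shows that a vertex with c(v) \<ge> 3 forces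
  one vertex of K with c \<le> 2, and c(v) = 4 forces two. Hence for r \<ge> 4 every r-clique K has
  weight \<Sum>(v \<in> K) 1/c(v) \<ge> (r + 2)/4, while every vertex spreads total weight at most 1
  over its r-cliques, giving k_r(G) (r + 2)/4 \<le> |V(G)|. The Turan graph T(r + 2, r) has
  four r-cliques and attains this bound.\<close>

lemma card_eq_2_if_many_subsets:
  assumes "finite P" "card P \<le> 2" "F \<subseteq> Pow P" "3 \<le> card F"
  shows "card P = 2"
proof (rule ccontr)
  assume "card P \<noteq> 2"
  then have "(2::nat) ^ card P \<le> 2 ^ 1"
    using assms(2) by (intro power_increasing) auto
  moreover have "card F \<le> 2 ^ card P"
    using card_mono[OF _ assms(3)] assms(1) by (simp add: card_Pow)
  ultimately show False using assms(4) by simp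
qed

lemma subset_in_subfamily_missing_one:
  assumes "finite P" "F \<subseteq> Pow P" "card (Pow P) \<le> card F + 1"
    and "X \<subseteq> P" "Y \<subseteq> P" "X \<noteq> Y"
  shows "X \<in> F \<or> Y \<in> F"
proof (rule ccontr)
  assume XY: "\<not> (X \<in> F \<or> Y \<in> F)"
  then have "card (insert X (insert Y F)) = card F + 2"
    using assms(6) finite_subset[OF assms(2)] assms(1) by simp
  moreover have "card (insert X (insert Y F)) \<le> card (Pow P)"
    using assms by (intro card_mono) auto
  ultimately show False using assms(3) by simp
qed

lemma three_subsets_of_pair:
  assumes "finite P" "card P \<le> 2" "F \<subseteq> Pow P" "3 \<le> card F"
  obtains y z where "P = {y, z}" "y \<noteq> z" "{y} \<in> F" "{z} \<in> F \<or> {y, z} \<in> F"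
proof -
  obtain a b where ab: "P = {a, b}" "a \<noteq> b"
    using card_eq_2_if_many_subsets[OF assms] by (auto simp: card_2_iff)
  have "card (Pow P) \<le> card F + 1" using ab assms(4) by (simp add: card_Pow)
  note in_F = subset_in_subfamily_missing_one[OF assms(1,3) this]
  have "{a} \<in> F \<or> {b} \<in> F" "{a} \<in> F \<or> {a, b} \<in> F" "{b} \<in> F \<or> {a, b} \<in> F"
    using in_F ab by auto
  then show ?thesis
    using that[of a b] that[of b a] ab by (auto simp: insert_commute)
qed

lemma four_subsets_of_pair:
  assumes "finite P" "card P \<le> 2" "F \<subseteq> Pow P" "4 \<le> card F"
  obtains y z where "P = {y, z}" "y \<noteq> z" "F = Pow P"
proof -
  obtain a b where ab: "P = {a, b}" "a \<noteq> b"
    using card_eq_2_if_many_subsets[OF assms(1-3)] assms(4) by (auto simp: card_2_iff)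
  have "F = Pow P"
    using assms ab by (intro card_seteq) (auto simp: card_Pow)
  with ab that show ?thesis by blast
qed

lemma sum_inverse_lower_bound:
  fixes c :: "'a \<Rightarrow> nat" and b :: nat
  assumes "finite K" "U \<subseteq> K" "\<And>v. v \<in> K \<Longrightarrow> 1 \<le> c v"
    and "\<And>v. v \<in> U \<Longrightarrow> c v \<le> 2" "\<And>v. v \<in> K - U \<Longrightarrow> c v \<le> b"
  shows "real (card U) / 2 + real (card K - card U) / b \<le> (\<Sum>v\<in>K. 1 / real (c v))"
proof -
  have inv_ge: "1 / real m \<le> 1 / real (c v)" if "v \<in> K" "c v \<le> m" for v m
    using assms(3)[OF that(1)] that(2) by (intro divide_left_mono) auto
  have "real (card U) * (1 / real 2) \<le> (\<Sum>v\<in>U. 1 / real (c v))"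
    by (rule sum_bounded_below) (use assms(2,4) inv_ge in blast)
  moreover have "real (card (K - U)) * (1 / real b) \<le> (\<Sum>v\<in>K - U. 1 / real (c v))"
    by (rule sum_bounded_below) (use assms(5) inv_ge in blast)
  moreover have "(\<Sum>v\<in>K. 1 / real (c v)) = (\<Sum>v\<in>U. 1 / real (c v)) + (\<Sum>v\<in>K - U. 1 / real (c v))"
    using sum.subset_diff[OF assms(2,1)] by (simp add: add.commute)
  moreover have "card (K - U) = card K - card U"
    using assms(1,2) by (simp add: card_Diff_subset finite_subset)
  ultimately show ?thesis by simp
qed

locale clique_bounded_graph =
  fixes V :: "'a set" and E :: "'a set set" and r :: nat
  assumes simple: "simple_graph V E"
    and clique_number: "clique_number_le V E r"
begin

definition adj :: "'a \<Rightarrow> 'a \<Rightarrow> bool" where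
  "adj x y \<longleftrightarrow> {x, y} \<in> E"

definition rcliques :: "'a set set" where
  "rcliques = {S. is_clique V E S \<and> card S = r}"

lemma finite_V: "finite V"
  using simple unfolding simple_graph_def by auto

lemma adj_sym: "adj x y \<longleftrightarrow> adj y x"
  unfolding adj_def by (simp add: insert_commute)

lemma is_clique_iff: "is_clique V E S \<longleftrightarrow> S \<subseteq> V \<and> (\<forall>x\<in>S. \<forall>y\<in>S. x \<noteq> y \<longrightarrow> adj x y)"
  unfolding is_clique_def adj_def by simp

lemma card_clique_le: "is_clique V E S \<Longrightarrow> card S \<le> r"
  using clique_number unfolding clique_number_le_def by auto

lemma rcliquesD:
  assumes "K \<in> rcliques"
  shows "K \<subseteq> V" "finite K" "card K = r" "\<And>x y. x \<in> K \<Longrightarrow> y \<in> K \<Longrightarrow> x \<noteq> y \<Longrightarrow> adj x y"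
  using assms finite_subset[OF _ finite_V] unfolding rcliques_def is_clique_iff by auto

lemma finite_rcliques: "finite rcliques"
  using rcliquesD(1) finite_V by (auto intro: finite_subset[of _ "Pow V"])

text \<open>K1 \<union> (K2 \<inter> K) is a clique containing K1, hence equal to it.\<close>
lemma rclique_eq_if_diff_eq:
  assumes K: "K \<in> rcliques" and K1: "K1 \<in> rcliques" and K2: "K2 \<in> rcliques"
    and eq: "K1 - K = K2 - K"
  shows "K1 = K2"
proof -
  let ?X = "K1 \<union> (K2 \<inter> K)"
  have "adj x y" if "x \<in> ?X" "y \<in> ?X" "x \<noteq> y" for x y
  proof -
    have "x \<in> K \<and> y \<in> K \<or> x \<in> K1 \<and> y \<in> K1 \<or> x \<in> K2 \<and> y \<in> K2"
      using that(1,2) eq by blast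
    then show ?thesis using that(3) rcliquesD(4)[OF K] rcliquesD(4)[OF K1] rcliquesD(4)[OF K2] by blast
  qed
  then have "is_clique V E ?X"
    unfolding is_clique_iff using rcliquesD(1)[OF K1] rcliquesD(1)[OF K] by blast
  then have "card ?X \<le> card K1"
    using card_clique_le rcliquesD(3)[OF K1] by simp
  then have "K1 = ?X"
    using rcliquesD(2)[OF K1] rcliquesD(2)[OF K] by (intro card_seteq) auto
  then have "K2 \<subseteq> K1" using eq by blast
  then show ?thesis
    using rcliquesD(2,3)[OF K1] rcliquesD(3)[OF K2] by (metis card_seteq order_refl)
qed

text \<open>x is adjacent to the r - 1 vertices of K \<inter> K', and not to the remaining one,
  since otherwise K + x would be an (r + 1)-clique.\<close>
lemma single_swap_misses_one:
  assumes K: "K \<in> rcliques" and K': "K' \<in> rcliques" and x: "K' - K = {x}"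
  obtains u where "u \<in> K" "\<not> adj x u" "\<And>w. w \<in> K \<Longrightarrow> w \<noteq> u \<Longrightarrow> adj x w"
proof -
  have x_in: "x \<notin> K" "x \<in> K'" using x by auto
  have "K' = insert x (K' \<inter> K)" using x by auto
  then have "card (K' \<inter> K) = r - 1"
    using rcliquesD(2,3)[OF K'] x_in by (metis card_insert_disjoint diff_Suc_1 finite_Int IntD2)
  moreover have "r \<noteq> 0" using rcliquesD(2,3)[OF K'] x_in by (auto simp: card_gt_0_iff)
  ultimately have "card (K - K') = 1"
    using rcliquesD(2,3)[OF K] by (simp add: card_Diff_subset_Int Int_commute)
  then obtain u where u: "K - K' = {u}" by (auto simp: card_Suc_eq)
  have adj_x: "adj x w" if "w \<in> K" "w \<noteq> u" for w
    using that u x_in rcliquesD(4)[OF K'] by blast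
  have "\<not> adj x u"
  proof
    assume "adj x u"
    then have "is_clique V E (insert x K)"
      unfolding is_clique_iff using adj_x adj_sym rcliquesD(1,4)[OF K] rcliquesD(1)[OF K'] x_in
      by auto
    then have "card (insert x K) \<le> r" by (rule card_clique_le)
    then show False using rcliquesD(2,3)[OF K] x_in by simp
  qed
  with u adj_x that show ?thesis by blast
qed

end

locale bounded_degree_clique_graph = clique_bounded_graph +
  assumes max_degree: "max_degree_le V E (r + 1)"
    and r_ge_4: "4 \<le> r"
begin

definition outer_nbrs :: "'a \<Rightarrow> 'a set \<Rightarrow> 'a set" where
  "outer_nbrs v K = {x \<in> V - K. adj v x}"

definition cliques_at :: "'a \<Rightarrow> 'a set set" where
  "cliques_at v = {K' \<in> rcliques. v \<in> K'}"

definition clique_deg :: "'a \<Rightarrow> nat" where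
  "clique_deg v = card (cliques_at v)"

lemma finite_outer_nbrs: "finite (outer_nbrs v K)"
  using finite_V unfolding outer_nbrs_def by auto

lemma outer_nbrsI: "x \<in> V \<Longrightarrow> x \<notin> K \<Longrightarrow> adj x w \<Longrightarrow> x \<in> outer_nbrs w K"
  unfolding outer_nbrs_def using adj_sym by blast

text \<open>v already has r - 1 neighbours inside K, so at most two outside.\<close>
lemma card_outer_nbrs_le_2:
  assumes K: "K \<in> rcliques" and v: "v \<in> K"
  shows "card (outer_nbrs v K) \<le> 2"
proof -
  have "(K - {v}) \<union> outer_nbrs v K \<subseteq> {u \<in> V. {u, v} \<in> E}"
    using rcliquesD(1,4)[OF K] v unfolding outer_nbrs_def adj_def by (auto simp: insert_commute)
  then have "card ((K - {v}) \<union> outer_nbrs v K) \<le> card {u \<in> V. {u, v} \<in> E}"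
    using finite_V by (intro card_mono) auto
  also have "\<dots> \<le> r + 1"
    using max_degree rcliquesD(1)[OF K] v unfolding max_degree_le_def graph_degree_def by auto
  finally have "card ((K - {v}) \<union> outer_nbrs v K) \<le> r + 1" .
  moreover have "card ((K - {v}) \<union> outer_nbrs v K) = (r - 1) + card (outer_nbrs v K)"
    using rcliquesD(2,3)[OF K] v finite_outer_nbrs
    by (subst card_Un_disjoint) (auto simp: outer_nbrs_def)
  ultimately show ?thesis using r_ge_4 by linarith
qed

lemma no_three_outer_nbrs:
  assumes "K \<in> rcliques" "w \<in> K" "{x, y, z} \<subseteq> outer_nbrs w K"
  shows "x = y \<or> x = z \<or> y = z"
proof (rule ccontr)
  assume "\<not> (x = y \<or> x = z \<or> y = z)"
  then have "card {x, y, z} = 3" by simp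
  then show False
    using card_mono[OF finite_outer_nbrs assms(3)] card_outer_nbrs_le_2[OF assms(1,2)] by simp
qed

definition traces :: "'a \<Rightarrow> 'a set \<Rightarrow> 'a set set" where
  "traces v K = (\<lambda>K'. K' - K) ` cliques_at v"

lemma tracesE:
  assumes "B \<in> traces v K"
  obtains K' where "K' \<in> rcliques" "v \<in> K'" "K' - K = B"
  using assms unfolding traces_def cliques_at_def by auto

lemma traces_subset_Pow:
  assumes K: "K \<in> rcliques" and v: "v \<in> K"
  shows "traces v K \<subseteq> Pow (outer_nbrs v K)"
proof
  fix B assume "B \<in> traces v K"
  then obtain K' where K': "K' \<in> rcliques" "v \<in> K'" "K' - K = B" by (rule tracesE)
  then show "B \<in> Pow (outer_nbrs v K)"
    using rcliquesD(1,4)[OF K'(1)] v adj_sym unfolding outer_nbrs_def by blast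
qed

lemma card_traces:
  assumes "K \<in> rcliques"
  shows "card (traces v K) = clique_deg v"
proof -
  have "inj_on (\<lambda>K'. K' - K) (cliques_at v)"
    using rclique_eq_if_diff_eq[OF assms] unfolding inj_on_def cliques_at_def by blast
  then show ?thesis unfolding traces_def clique_deg_def by (rule card_image)
qed

lemma clique_deg_le_4:
  assumes "K \<in> rcliques" "v \<in> K"
  shows "clique_deg v \<le> 4"
proof -
  have "clique_deg v \<le> card (Pow (outer_nbrs v K))"
    unfolding card_traces[OF assms(1), symmetric]
    using traces_subset_Pow[OF assms] finite_outer_nbrs by (intro card_mono) auto
  also have "\<dots> = 2 ^ card (outer_nbrs v K)"
    by (simp add: card_Pow finite_outer_nbrs)
  also have "\<dots> \<le> 2 ^ 2"
    using card_outer_nbrs_le_2[OF assms] by (intro power_increasing) auto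
  finally show ?thesis by simp
qed

lemma clique_deg_ge_1:
  assumes "K \<in> rcliques" "v \<in> K"
  shows "1 \<le> clique_deg v"
proof -
  have "K \<in> cliques_at v" "finite (cliques_at v)"
    using assms finite_rcliques unfolding cliques_at_def by auto
  then show ?thesis unfolding clique_deg_def by (auto simp: Suc_le_eq card_gt_0_iff)
qed

lemma no_three_single_swaps:
  assumes K: "K \<in> rcliques"
    and "Kx \<in> rcliques" "Kx - K = {x}" and "Ky \<in> rcliques" "Ky - K = {y}"
    and "Kz \<in> rcliques" "Kz - K = {z}"
  shows "x = y \<or> x = z \<or> y = z"
proof -
  obtain ux where ux: "\<And>w. w \<in> K \<Longrightarrow> w \<noteq> ux \<Longrightarrow> adj x w"
    using single_swap_misses_one[OF K assms(2,3)] by blast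
  obtain uy where uy: "\<And>w. w \<in> K \<Longrightarrow> w \<noteq> uy \<Longrightarrow> adj y w"
    using single_swap_misses_one[OF K assms(4,5)] by blast
  obtain uz where uz: "\<And>w. w \<in> K \<Longrightarrow> w \<noteq> uz \<Longrightarrow> adj z w"
    using single_swap_misses_one[OF K assms(6,7)] by blast
  have "card {ux, uy, uz} \<le> 3" by (simp add: card_insert_le_m1)
  then have "card {ux, uy, uz} < card K" using rcliquesD(3)[OF K] r_ge_4 by simp
  then obtain w where w: "w \<in> K" "w \<notin> {ux, uy, uz}"
    by (metis card_mono finite.emptyI finite.insertI not_le subsetI)
  have "x \<in> V" "x \<notin> K" "y \<in> V" "y \<notin> K" "z \<in> V" "z \<notin> K"
    using assms rcliquesD(1) by blast+
  then have "{x, y, z} \<subseteq> outer_nbrs w K"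
    using w ux uy uz outer_nbrsI by auto
  then show ?thesis by (rule no_three_outer_nbrs[OF K w(1)])
qed

text \<open>Otherwise both outer neighbours y, z of u come from further r-cliques through u,
  and some w in K would be adjacent to x, y and z.\<close>
lemma clique_deg_le_2_if_missed:
  assumes K: "K \<in> rcliques" and Kx: "Kx \<in> rcliques" "Kx - K = {x}"
    and u: "u \<in> K" "\<not> adj x u"
  shows "clique_deg u \<le> 2"
proof (rule ccontr)
  assume "\<not> clique_deg u \<le> 2"
  then have "3 \<le> card (traces u K)" using card_traces[OF K] by simp
  then obtain y z where yz: "outer_nbrs u K = {y, z}" "y \<noteq> z" "{y} \<in> traces u K"
      "{z} \<in> traces u K \<or> {y, z} \<in> traces u K"
    using three_subsets_of_pair[OF finite_outer_nbrs card_outer_nbrs_le_2[OF K u(1)]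
        traces_subset_Pow[OF K u(1)]] by blast
  obtain Ky where Ky: "Ky \<in> rcliques" "Ky - K = {y}" using yz(3) by (rule tracesE)
  have "x \<notin> outer_nbrs u K" using u(2) adj_sym unfolding outer_nbrs_def by auto
  then have xyz: "x \<noteq> y" "x \<noteq> z" using yz(1) by auto
  show False
  proof (cases "{z} \<in> traces u K")
    case True
    obtain Kz where "Kz \<in> rcliques" "Kz - K = {z}" using True by (rule tracesE)
    with no_three_single_swaps[OF K Kx Ky] xyz yz(2) show False by blast
  next
    case False
    then obtain K2 where K2: "K2 \<in> rcliques" "u \<in> K2" "K2 - K = {y, z}"
      using yz(4) by (auto elim: tracesE)
    have "card (K2 - K) = card K2 - card (K2 \<inter> K)"
      using rcliquesD(2)[OF K2(1)] by (simp add: card_Diff_subset_Int)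
    then have "card (K2 \<inter> K) + 2 = r"
      using rcliquesD(2,3)[OF K2(1)] K2(3) yz(2) card_mono[of K2 "K2 \<inter> K"] by auto
    then have "K2 \<inter> K \<noteq> {u}" using r_ge_4 by auto
    then obtain w where w: "w \<in> K2" "w \<in> K" "w \<noteq> u" using K2(2) u(1) by blast
    have "adj x w" using single_swap_misses_one[OF K Kx] u w by metis
    moreover have "y \<in> K2" "z \<in> K2" "y \<notin> K" "z \<notin> K" "y \<in> V" "z \<in> V" "x \<in> V" "x \<notin> K"
      using K2(3) Kx rcliquesD(1)[OF K2(1)] rcliquesD(1)[OF Kx(1)] by auto
    ultimately have "{x, y, z} \<subseteq> outer_nbrs w K"
      using rcliquesD(4)[OF K2(1)] w(1) w(2) by (auto intro!: outer_nbrsI)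
    with no_three_outer_nbrs[OF K w(2)] xyz yz(2) show False by blast
  qed
qed

lemma low_vertex_if_clique_deg_ge_3:
  assumes K: "K \<in> rcliques" and v: "v \<in> K" and "3 \<le> clique_deg v"
  obtains u where "u \<in> K" "clique_deg u \<le> 2"
proof -
  have "3 \<le> card (traces v K)" using card_traces[OF K] assms(3) by simp
  then obtain y where "{y} \<in> traces v K"
    using three_subsets_of_pair[OF finite_outer_nbrs card_outer_nbrs_le_2[OF K v]
        traces_subset_Pow[OF K v]] by metis
  then obtain Ky where Ky: "Ky \<in> rcliques" "Ky - K = {y}" by (rule tracesE)
  obtain u where "u \<in> K" "\<not> adj y u" using single_swap_misses_one[OF K Ky] by blast
  with clique_deg_le_2_if_missed[OF K Ky] that show ?thesis by blast
qed

text \<open>The outer neighbours y, z of v are adjacent and miss distinct vertices of K,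
  since otherwise K - u + y + z would be an (r + 1)-clique.\<close>
lemma two_low_vertices_if_clique_deg_ge_4:
  assumes K: "K \<in> rcliques" and v: "v \<in> K" and "4 \<le> clique_deg v"
  obtains u1 u2 where "u1 \<in> K" "u2 \<in> K" "u1 \<noteq> u2" "clique_deg u1 \<le> 2" "clique_deg u2 \<le> 2"
proof -
  have "4 \<le> card (traces v K)" using card_traces[OF K] assms(3) by simp
  then obtain y z where yz: "outer_nbrs v K = {y, z}" "y \<noteq> z" "traces v K = Pow {y, z}"
    using four_subsets_of_pair[OF finite_outer_nbrs card_outer_nbrs_le_2[OF K v]
        traces_subset_Pow[OF K v]] by metis
  have "{y} \<in> traces v K" "{z} \<in> traces v K" "{y, z} \<in> traces v K"
    using yz(3) by auto
  then obtain Ky Kz K2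
    where Ky: "Ky \<in> rcliques" "Ky - K = {y}" and Kz: "Kz \<in> rcliques" "Kz - K = {z}"
      and K2: "K2 \<in> rcliques" "K2 - K = {y, z}"
    by (metis tracesE)
  obtain uy where uy: "uy \<in> K" "\<not> adj y uy" "\<And>w. w \<in> K \<Longrightarrow> w \<noteq> uy \<Longrightarrow> adj y w"
    using single_swap_misses_one[OF K Ky] by blast
  obtain uz where uz: "uz \<in> K" "\<not> adj z uz" "\<And>w. w \<in> K \<Longrightarrow> w \<noteq> uz \<Longrightarrow> adj z w"
    using single_swap_misses_one[OF K Kz] by blast
  have yz_V: "y \<in> V" "y \<notin> K" "z \<in> V" "z \<notin> K"
    using yz(1) unfolding outer_nbrs_def by auto
  have "uy \<noteq> uz"
  proof
    assume "uy = uz"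
    let ?X = "insert y (insert z (K - {uy}))"
    have "adj y z" using rcliquesD(4)[OF K2(1)] K2(2) yz(2) by auto
    have "adj p q" if "p \<in> ?X" "q \<in> ?X" "p \<noteq> q" for p q
      using that \<open>adj y z\<close> \<open>uy = uz\<close> uy(3) uz(3) rcliquesD(4)[OF K] adj_sym by blast
    then have "is_clique V E ?X"
      unfolding is_clique_iff using rcliquesD(1)[OF K] yz_V by blast
    then have "card ?X \<le> r" by (rule card_clique_le)
    moreover have "card ?X = r + 1"
      using yz_V yz(2) rcliquesD(2,3)[OF K] uy(1) r_ge_4 by simp
    ultimately show False by simp
  qed
  with clique_deg_le_2_if_missed[OF K Ky uy(1,2)] clique_deg_le_2_if_missed[OF K Kz uz(1,2)]
  show ?thesis using that uy(1) uz(1) by blast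
qed

lemma clique_weight_ge:
  assumes K: "K \<in> rcliques"
  shows "(real r + 2) / 4 \<le> (\<Sum>v\<in>K. 1 / real (clique_deg v))"
proof -
  let ?W = "\<Sum>v\<in>K. 1 / real (clique_deg v)"
  have bound: "real (card U) / 2 + real (r - card U) / real b \<le> ?W"
    if "U \<subseteq> K" "\<forall>v\<in>U. clique_deg v \<le> 2" "\<forall>v\<in>K - U. clique_deg v \<le> b" for U b
    using sum_inverse_lower_bound[OF rcliquesD(2)[OF K] that(1) clique_deg_ge_1[OF K]] that(2,3)
      rcliquesD(3)[OF K] by auto
  consider (four) v where "v \<in> K" "4 \<le> clique_deg v"
    | (three) v where "v \<in> K" "3 \<le> clique_deg v" "\<forall>v\<in>K. clique_deg v < 4"
    | (two) "\<forall>v\<in>K. clique_deg v < 3"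
    by (meson not_le)
  then show ?thesis
  proof cases
    case four
    then obtain u1 u2 where "u1 \<in> K" "u2 \<in> K" "u1 \<noteq> u2" "clique_deg u1 \<le> 2" "clique_deg u2 \<le> 2"
      using two_low_vertices_if_clique_deg_ge_4[OF K] by metis
    with bound[of "{u1, u2}" 4] clique_deg_le_4[OF K] r_ge_4 show ?thesis
      by (simp add: of_nat_diff field_simps)
  next
    case three
    then obtain u where "u \<in> K" "clique_deg u \<le> 2"
      using low_vertex_if_clique_deg_ge_3[OF K] by metis
    moreover have "\<forall>v\<in>K - {u}. clique_deg v \<le> 3" using three(3) by fastforce
    ultimately show ?thesis using bound[of "{u}" 3] r_ge_4 by (simp add: of_nat_diff field_simps)
  next
    case two
    then have "\<forall>v\<in>K. clique_deg v \<le> 2" by fastforce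
    with bound[of "{}" 2] r_ge_4 show ?thesis by simp
  qed
qed

lemma card_rcliques_bound: "real (card rcliques) * (real r + 2) \<le> 4 * real (card V)"
proof -
  let ?f = "\<lambda>v. 1 / real (clique_deg v)"
  have "real (card rcliques) * ((real r + 2) / 4) \<le> (\<Sum>K\<in>rcliques. \<Sum>v\<in>K. ?f v)"
    by (rule sum_bounded_below) (rule clique_weight_ge)
  also have "\<dots> = (\<Sum>K\<in>rcliques. \<Sum>v\<in>{v. v \<in> V \<and> v \<in> K}. ?f v)"
    using rcliquesD(1) by (intro sum.cong refl) (metis Collect_mem_eq Collect_conj_eq inf.absorb2)
  also have "\<dots> = (\<Sum>v\<in>V. \<Sum>K\<in>cliques_at v. ?f v)"
    unfolding cliques_at_def by (rule sum.swap_restrict[OF finite_rcliques finite_V])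
  also have "\<dots> = (\<Sum>v\<in>V. real (clique_deg v) * ?f v)"
    unfolding clique_deg_def by simp
  also have "\<dots> \<le> (\<Sum>v\<in>V. 1)"
    by (intro sum_mono) simp
  finally show ?thesis by simp
qed

lemma rho_le: "1 \<le> card V \<Longrightarrow> rho r V E \<le> 4 / (real r + 2)"
  using card_rcliques_bound
  unfolding rho_def k_count_def rcliques_def[symmetric] by (simp add: field_simps)

end

lemma turan_E_iff: "{u, v} \<in> turan_E n r \<longleftrightarrow> u < n \<and> v < n \<and> u mod r \<noteq> v mod r"
  unfolding turan_E_def by (auto simp: doubleton_eq_iff)

lemma simple_graph_turan: "simple_graph (turan_V n) (turan_E n r)"
  unfolding simple_graph_def turan_V_def turan_E_def by (auto simp: card_2_iff)

lemma max_degree_turan: "max_degree_le (turan_V n) (turan_E n r) (n - 1)"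
  unfolding max_degree_le_def graph_degree_def
proof
  fix v assume v: "v \<in> turan_V n"
  have "{u \<in> turan_V n. {u, v} \<in> turan_E n r} \<subseteq> turan_V n - {v}"
    using turan_E_iff by auto
  then show "card {u \<in> turan_V n. {u, v} \<in> turan_E n r} \<le> n - 1"
    using v card_mono[of "turan_V n - {v}"] unfolding turan_V_def by fastforce
qed

lemma clique_number_turan:
  assumes "0 < r"
  shows "clique_number_le (turan_V n) (turan_E n r) r"
  unfolding clique_number_le_def
proof (intro allI impI)
  fix S assume "is_clique (turan_V n) (turan_E n r) S"
  then have "inj_on (\<lambda>i. i mod r) S"
    unfolding is_clique_def inj_on_def using turan_E_iff by blast
  moreover have "(\<lambda>i. i mod r) ` S \<subseteq> {..<r}" using assms by auto
  ultimately show "card S \<le> r"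
    by (metis card_image card_lessThan card_mono finite_lessThan)
qed

text \<open>For r \<ge> 2 the parts of T(r + 2, r) are {0, r}, {1, r + 1} and the singletons
  {2}, ..., {r - 1}; choosing a from the first and b from the second part gives an r-clique.\<close>
definition turan_transversal :: "nat \<Rightarrow> nat \<Rightarrow> nat \<Rightarrow> nat set" where
  "turan_transversal r a b = insert a (insert b {2..<r})"

lemma turan_transversal_rclique:
  assumes r: "2 \<le> r" and a: "a \<in> {0, r}" and b: "b \<in> {1, r + 1}"
  shows "is_clique (turan_V (r + 2)) (turan_E (r + 2) r) (turan_transversal r a b)
    \<and> card (turan_transversal r a b) = r"
proof
  have mod_eq: "x mod r = (if x = a then 0 else if x = b then 1 else x)"
    if "x \<in> turan_transversal r a b" for x
    using that a b r unfolding turan_transversal_def by (auto simp: mod_Suc)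
  show "is_clique (turan_V (r + 2)) (turan_E (r + 2) r) (turan_transversal r a b)"
    unfolding is_clique_def turan_V_def
  proof (intro conjI ballI impI)
    show "turan_transversal r a b \<subseteq> {0..<r + 2}"
      using a b unfolding turan_transversal_def by auto
    then show "{x, y} \<in> turan_E (r + 2) r"
      if "x \<in> turan_transversal r a b" "y \<in> turan_transversal r a b" "x \<noteq> y" for x y
      using that mod_eq[OF that(1)] mod_eq[OF that(2)] turan_E_iff r
      unfolding turan_transversal_def by (auto split: if_splits)
  qed
  show "card (turan_transversal r a b) = r"
    using a b r unfolding turan_transversal_def by auto
qed

lemma k_count_turan_ge_4:
  assumes "2 \<le> r"
  shows "4 \<le> k_count r (turan_V (r + 2)) (turan_E (r + 2) r)"
proof -
  let ?T = "turan_transversal r"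
  let ?C = "{S. is_clique (turan_V (r + 2)) (turan_E (r + 2) r) S \<and> card S = r}"
  have sub: "{?T 0 1, ?T 0 (r + 1), ?T r 1, ?T r (r + 1)} \<subseteq> ?C"
    using turan_transversal_rclique[OF assms] by auto
  have "finite ?C"
    by (rule finite_subset[of _ "Pow (turan_V (r + 2))"]) (auto simp: is_clique_def turan_V_def)
  have "card {?T 0 1, ?T 0 (r + 1), ?T r 1, ?T r (r + 1)} = 4"
  proof -
    have "0 \<in> ?T 0 1" "0 \<in> ?T 0 (r + 1)" "0 \<notin> ?T r 1" "0 \<notin> ?T r (r + 1)"
      "1 \<in> ?T 0 1" "1 \<in> ?T r 1" "1 \<notin> ?T 0 (r + 1)" "1 \<notin> ?T r (r + 1)"
      using assms unfolding turan_transversal_def by auto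
    then have "?T 0 1 \<noteq> ?T 0 (r + 1)" "?T 0 1 \<noteq> ?T r 1" "?T 0 1 \<noteq> ?T r (r + 1)"
      "?T 0 (r + 1) \<noteq> ?T r 1" "?T 0 (r + 1) \<noteq> ?T r (r + 1)" "?T r 1 \<noteq> ?T r (r + 1)"
      by blast+
    then show ?thesis by simp
  qed
  with card_mono[OF \<open>finite ?C\<close> sub] show ?thesis unfolding k_count_def by simp
qed

lemma rho_turan_ge:
  assumes "2 \<le> r"
  shows "4 / (real r + 2) \<le> rho r (turan_V (r + 2)) (turan_E (r + 2) r)"
proof -
  have "card (turan_V (r + 2)) = r + 2" unfolding turan_V_def by simp
  then show ?thesis
    unfolding rho_def using k_count_turan_ge_4[OF assms] by (simp add: divide_right_mono add.commute)
qed

lemma turan_in_graph_class: "0 < r \<Longrightarrow> (turan_V (r + 2), turan_E (r + 2) r) \<in> graph_class (r + 1) r"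
  using simple_graph_turan max_degree_turan[of "r + 2"] clique_number_turan
  unfolding graph_class_def by auto

theorem mainTheorem13:
  fixes r :: nat
  assumes "r \<ge> 4"
  shows "f_sup r (r + 1) r = rho r (turan_V (r + 2)) (turan_E (r + 2) r)
       \<and> rho r (turan_V (r + 2)) (turan_E (r + 2) r) = 4 / (real r + 2)"
proof -
  let ?\<rho>s = "{rho r V E |V E. (V, E) \<in> graph_class (r + 1) r \<and> card V \<ge> 1}"
  have upper: "x \<le> 4 / (real r + 2)" if "x \<in> ?\<rho>s" for x
  proof -
    obtain V E where x: "x = rho r V E" and G: "(V, E) \<in> graph_class (r + 1) r" "1 \<le> card V"
      using \<open>x \<in> ?\<rho>s\<close> by blast
    interpret bounded_degree_clique_graph V E r
      using G(1) assms unfolding graph_class_def by unfold_locales auto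
    show ?thesis using rho_le[OF G(2)] x by simp
  qed
  have T_in: "rho r (turan_V (r + 2)) (turan_E (r + 2) r) \<in> ?\<rho>s"
    using turan_in_graph_class[of r] assms by (fastforce simp: turan_V_def)
  have rho_T: "rho r (turan_V (r + 2)) (turan_E (r + 2) r) = 4 / (real r + 2)"
    using upper[OF T_in] rho_turan_ge[of r] assms by simp
  have "f_sup r (r + 1) r = 4 / (real r + 2)"
    unfolding f_sup_def using T_in[unfolded rho_T] upper by (rule cSup_eq_maximum)
  with rho_T show ?thesis by simp
qed

end
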